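(* Suppose Assumptions A1 and A2 hold, let $\alpha>0$, and let $(x(t),y(t))$, $t\ge0$, be the solution of (SGF). For $\beta,c>0$ define $$\mathcal{E}(t)=f(x(t),y(t))-f^\star+\beta\|\nabla_y g(x(t),y(t))\|+c\int_0^t\|F(x(\tau),y(\tau))\|^2\,d\tau .$$ Then: (1) $\|\nabla_y g(x(t),y(t))\|=e^{-\alpha t}\|\nabla_y g(x(0),y(0))\|$ for all $t\ge0$; (2) there exist $\beta,c>0$ such that $\dot{\mathcal{E}}(t)\le0$ for all $t\ge0$, and in particular, for all $t>0$, $$\frac1t\int_0^t\|\nabla\ell(x(\tau))\|^2d\tau\le\frac{2\mathcal{E}(0)}{ct}+\frac{1-e^{-2\alpha t}}{\alpha t}\,\frac{M_1^2}{\mu_g^2}\|\nabla_y g(x(0),y(0))\|^2,$$ where $M_1$ is the constant of Lemma 1.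
   Context: $f,g:\mathbb{R}^n\times\mathbb{R}^m\to\mathbb{R}$; $\nabla^2_{yx}g(x,y)\in\mathbb{R}^{m\times n}$ is the Jacobian with respect to $x$ of $\nabla_y g(x,y)$, $\nabla^2_{yy}g$ the Hessian in $y$. Assumption A1: $f$ is continuously differentiable; $\|\nabla_x f(x,y)\|\le C^f_x$, $\|\nabla_y f(x,y)\|\le C^f_y$ for all $(x,y)$; $\nabla_x f,\nabla_y f$ are Lipschitz on $\mathbb{R}^n\times\mathbb{R}^m$. Assumption A2: $g$ is twice continuously differentiable; $g(x,\cdot)$ is $\mu_g$-strongly convex for each $x$; $\nabla_y g(x,\cdot)$ is $L^g_{yy}$-Lipschitz for each $x$ and $\nabla_y g(\cdot,y)$ is $L^g_{yx}$-Lipschitz for each $y$; $\nabla^2_{yx}g$, $\nabla^2_{yy}g$ are Lipschitz on $\mathbb{R}^n\times\mathbb{R}^m$. $y^\star(x):=\arg\min_y g(x,y)$, $\ell(x):=f(x,y^\star(x))$, and $F(x,y):=\nabla_x f(x,y)-\nabla^2_{yx}g(x,y)^\top[\nabla^2_{yy}g(x,y)]^{-1}\nabla_y f(x,y)$. $M_1>0$ is a constant with $\|\nabla\ell(x)-F(x,y)\|\le M_1\|y-y^\star(x)\|$ for all $x,y$. $f^\star$ is the global optimal value of $\min_{x,y}f(x,y)$ subject to $\nabla_y g(x,y)=0$. Safe gradient flow (SGF): $\dot x=-\nabla_x f(x,y)-\nabla^2_{yx}g(x,y)^\top\lambda(x,y)$, $\dot y=-\nabla_y f(x,y)-\nabla^2_{yy}g(x,y)^\top\lambda(x,y)$,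 with $\lambda=-\big(\nabla^2_{yx}g\,\nabla^2_{yx}g^\top+(\nabla^2_{yy}g)^2\big)^{-1}\big(\nabla^2_{yx}g\,\nabla_x f+\nabla^2_{yy}g\,\nabla_y f-\alpha\nabla_y g\big)$ (all at $(x,y)$); equivalently $(\dot x,\dot y)$ is the minimizer of $\tfrac12\|\dot x_d+\nabla_x f\|^2+\tfrac12\|\dot y_d+\nabla_y f\|^2$ subject to $\nabla^2_{yx}g\,\dot x_d+\nabla^2_{yy}g\,\dot y_d+\alpha\nabla_y g=0$. *)

theory Defs
  imports "HOL-Analysis.Analysis"
begin

definition grad :: "(real^'n \<Rightarrow> real) \<Rightarrow> real^'n \<Rightarrow> real^'n" where
  "grad h x = (\<chi> i. frechet_derivative h (at x) (axis i 1))"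

definition ystar :: "(real^'n \<Rightarrow> real^'m \<Rightarrow> real) \<Rightarrow> real^'n \<Rightarrow> real^'m" where
  "ystar g x = (THE y. \<forall>z. g x y \<le> g x z)"

definition strongly_convex_y :: "real \<Rightarrow> (real^'n \<Rightarrow> real^'m \<Rightarrow> real) \<Rightarrow> bool" where
  "strongly_convex_y mu g \<longleftrightarrow> mu > 0 \<and> (\<forall>x y z t. 0 \<le> t \<and> t \<le> 1 \<longrightarrow>
     g x ((1 - t) *\<^sub>R y + t *\<^sub>R z) \<le> (1 - t) * g x y + t * g x z - mu / 2 * t * (1 - t) * (norm (y - z))\<^sup>2)"

text \<open>F(x,y) = grad_x f - (grad^2_yx g)^T (grad^2_yy g)^{-1} grad_y f.
  Hyx x y :: real^'n^'m is the m x n matrix grad^2_yx g(x,y).\<close>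
definition Fmap ::
  "(real^'n \<Rightarrow> real^'m \<Rightarrow> real^'n) \<Rightarrow> (real^'n \<Rightarrow> real^'m \<Rightarrow> real^'m) \<Rightarrow>
   (real^'n \<Rightarrow> real^'m \<Rightarrow> real^'n^'m) \<Rightarrow> (real^'n \<Rightarrow> real^'m \<Rightarrow> real^'m^'m) \<Rightarrow>
   real^'n \<Rightarrow> real^'m \<Rightarrow> real^'n" where
  "Fmap fx fy Hyx Hyy x y =
     fx x y - transpose (Hyx x y) *v (matrix_inv (Hyy x y) *v fy x y)"

definition sgf_lambda ::
  "real \<Rightarrow> (real^'n \<Rightarrow> real^'m \<Rightarrow> real^'n) \<Rightarrow> (real^'n \<Rightarrow> real^'m \<Rightarrow> real^'m) \<Rightarrow>
   (real^'n \<Rightarrow> real^'m \<Rightarrow> real^'m) \<Rightarrow>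
   (real^'n \<Rightarrow> real^'m \<Rightarrow> real^'n^'m) \<Rightarrow> (real^'n \<Rightarrow> real^'m \<Rightarrow> real^'m^'m) \<Rightarrow>
   real^'n \<Rightarrow> real^'m \<Rightarrow> real^'m" where
  "sgf_lambda \<alpha> fx fy gy Hyx Hyy x y =
     - (matrix_inv (Hyx x y ** transpose (Hyx x y) + Hyy x y ** Hyy x y) *v
        (Hyx x y *v fx x y + Hyy x y *v fy x y - \<alpha> *\<^sub>R gy x y))"

end

(* The multiplier lambda makes the velocity (xdot, ydot) satisfy
     Hyx xdot + Hyy ydot = - alpha grad_y g,
   i.e. d/dt grad_y g = - alpha grad_y g along the flow, which is part (1).
   At alpha = 0 the velocity is minus the orthogonal projection u of grad f onto the kernel of
   [Hyx Hyy], so f decreases at rate |u|^2; since (F, -Hyy^-1 Hyx F) lies in that kernel,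
   |F|^2 <= (1 + (Lyx/mu_g)^2) |u|^2.  The alpha-part of the velocity has size at most
   alpha |grad_y g| / mu_g, so df/dt <= - c |F|^2 + O(alpha |grad_y g|), and the extra term
   beta |grad_y g| in the energy, which decays at rate alpha, absorbs the error: E is
   nonincreasing.  Strong convexity gives |y - y*(x)| <= |grad_y g| / mu_g, hence
   f >= f* - (C_y/mu_g) |grad_y g| and E(t) >= c int_0^t |F|^2, and
   |grad l(x)| <= |F| + (M1/mu_g) e^(-alpha t) |grad_y g(0)|; squaring and integrating gives (2). *)

theory Submission
  imports Defs
begin

section \<open>Calculus\<close>

lemma DERIV_le_of_quotient_le:
  fixes \<phi> R :: "real \<Rightarrow> real"
  assumes "(\<phi> has_real_derivative D) (at 0)"
    and "\<And>t. 0 < t \<Longrightarrow> t < 1 \<Longrightarrow> (\<phi> t - \<phi> 0) / t \<le> R t"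
    and "(R \<longlongrightarrow> R0) (at_right 0)"
  shows "D \<le> R0"
proof -
  have "((\<lambda>h. (\<phi> (0 + h) - \<phi> 0) / h) \<longlongrightarrow> D) (at 0)"
    using assms(1) by (simp add: DERIV_def)
  then have "((\<lambda>h. (\<phi> h - \<phi> 0) / h) \<longlongrightarrow> D) (at_right 0)"
    by (auto intro: tendsto_mono[OF at_le])
  moreover have "\<forall>\<^sub>F t in at_right 0. (\<phi> t - \<phi> 0) / t \<le> R t"
    unfolding eventually_at_right[OF zero_less_one] using assms(2) by (intro exI[of _ 1]) auto
  ultimately show ?thesis
    using tendsto_le[OF trivial_limit_at_right_real assms(3)] by blast
qed

lemma DERIV_ge_of_quotient_ge:
  fixes \<phi> R :: "real \<Rightarrow> real"
  assumes "(\<phi> has_real_derivative D) (at 0)"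
    and "\<And>t. 0 < t \<Longrightarrow> t < 1 \<Longrightarrow> R t \<le> (\<phi> t - \<phi> 0) / t"
    and "(R \<longlongrightarrow> R0) (at_right 0)"
  shows "R0 \<le> D"
proof -
  have "- D \<le> - R0"
  proof (rule DERIV_le_of_quotient_le)
    show "((\<lambda>t. - \<phi> t) has_real_derivative - D) (at 0)"
      using assms(1) by (rule DERIV_minus)
    show "(- \<phi> t - - \<phi> 0) / t \<le> - R t" if "0 < t" "t < 1" for t
      using assms(2)[OF that] that by (simp add: field_simps)
    show "((\<lambda>t. - R t) \<longlongrightarrow> - R0) (at_right 0)"
      using assms(3) by (rule tendsto_minus)
  qed
  then show ?thesis by simp
qed

lemma has_real_derivative_line_inner:
  fixes \<Phi> :: "'a::real_normed_vector \<Rightarrow> 'b::real_inner"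
  assumes "(\<Phi> has_derivative D) (at (p + t *\<^sub>R w))"
  shows "((\<lambda>s. \<Phi> (p + s *\<^sub>R w) \<bullet> z) has_real_derivative D w \<bullet> z) (at t)"
proof -
  have "((\<lambda>s. p + s *\<^sub>R w) has_derivative (\<lambda>h. h *\<^sub>R w)) (at t)"
    by (auto intro!: derivative_eq_intros)
  from has_derivative_compose[OF this assms]
  have "((\<lambda>s. \<Phi> (p + s *\<^sub>R w) \<bullet> z) has_derivative (\<lambda>h. D (h *\<^sub>R w) \<bullet> z)) (at t)"
    by (auto intro!: derivative_eq_intros)
  moreover have "D (h *\<^sub>R w) \<bullet> z = (D w \<bullet> z) * h" for h
    using linear_scale[OF has_derivative_linear[OF assms]] by simp
  ultimately show ?thesis
    unfolding has_field_derivative_def by simp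
qed

lemma has_real_derivative_line:
  fixes \<phi> :: "'a::real_normed_vector \<Rightarrow> real"
  assumes "(\<phi> has_derivative D) (at (p + t *\<^sub>R w))"
  shows "((\<lambda>s. \<phi> (p + s *\<^sub>R w)) has_real_derivative D w) (at t)"
  using has_real_derivative_line_inner[OF assms, of 1] by simp

lemma derivative_norm_le_lipschitz:
  fixes \<Phi> :: "'a::real_normed_vector \<Rightarrow> 'b::real_inner"
  assumes deriv: "(\<Phi> has_derivative D) (at a)" and lip: "L-lipschitz_on UNIV \<Phi>"
  shows "norm (D v) \<le> L * norm v"
proof -
  let ?w = "D v"
  have "D v \<bullet> ?w \<le> L * norm v * norm ?w"
  proof (rule DERIV_le_of_quotient_le)
    show "((\<lambda>t. \<Phi> (a + t *\<^sub>R v) \<bullet> ?w) has_real_derivative D v \<bullet> ?w) (at 0)"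
      using has_real_derivative_line_inner[of \<Phi> D a 0 v ?w] deriv by simp
    show "(\<Phi> (a + t *\<^sub>R v) \<bullet> ?w - \<Phi> (a + 0 *\<^sub>R v) \<bullet> ?w) / t \<le> L * norm v * norm ?w"
      if "0 < t" "t < 1" for t
    proof -
      have "norm (\<Phi> (a + t *\<^sub>R v) - \<Phi> a) \<le> L * (t * norm v)"
        using lipschitz_onD[OF lip, of "a + t *\<^sub>R v" a] that by (simp add: dist_norm)
      then have "(\<Phi> (a + t *\<^sub>R v) - \<Phi> a) \<bullet> ?w \<le> L * (t * norm v) * norm ?w"
        by (meson norm_cauchy_schwarz norm_ge_zero mult_right_mono order_trans)
      then show ?thesis
        using that by (simp add: divide_le_eq inner_diff_left algebra_simps)
    qed
  qed simp
  then have "norm ?w * norm ?w \<le> (L * norm v) * norm ?w"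
    by (simp add: dot_square_norm power2_eq_square[symmetric])
  then show ?thesis
    using lipschitz_on_nonneg[OF lip]
    by (cases "norm ?w = 0") (auto simp: mult_le_cancel_right)
qed

lemma lipschitz_of_bounded_gradient:
  fixes \<phi> :: "'a::euclidean_space \<Rightarrow> real"
  assumes "\<And>z. (\<phi> has_derivative (\<lambda>k. G z \<bullet> k)) (at z)" and "\<And>z. norm (G z) \<le> C"
  shows "norm (\<phi> b - \<phi> c) \<le> C * norm (b - c)"
proof -
  have "onorm (\<lambda>k. G z \<bullet> k) \<le> C" for z
  proof (rule onorm_le)
    fix k
    have "norm (G z \<bullet> k) \<le> norm (G z) * norm k"
      using Cauchy_Schwarz_ineq2[of "G z" k] by simp
    also have "\<dots> \<le> C * norm k" using assms(2) by (simp add: mult_right_mono)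
    finally show "norm (G z \<bullet> k) \<le> C * norm k" .
  qed
  then show ?thesis
    using differentiable_bound[of UNIV \<phi> "\<lambda>z k. G z \<bullet> k" C b c] assms(1) by auto
qed

lemma has_derivative_second_argument:
  assumes "((\<lambda>p. \<phi> (fst p) (snd p)) has_derivative D) (at (a, b))"
  shows "(\<phi> a has_derivative (\<lambda>k. D (0, k))) (at b)"
proof -
  have "((\<lambda>z. (a, z)) has_derivative (\<lambda>k. (0, k))) (at b)"
    by (intro has_derivative_Pair has_derivative_const has_derivative_ident)
  from has_derivative_compose[OF this assms] show ?thesis by simp
qed

lemma has_derivative_first_argument:
  assumes "((\<lambda>p. \<phi> (fst p) (snd p)) has_derivative D) (at (a, b))"
  shows "((\<lambda>z. \<phi> z b) has_derivative (\<lambda>k. D (k, 0))) (at a)"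
proof -
  have "((\<lambda>z. (z, b)) has_derivative (\<lambda>k. (k, 0))) (at a)"
    by (intro has_derivative_Pair has_derivative_const has_derivative_ident)
  from has_derivative_compose[OF this assms] show ?thesis by simp
qed

lemma exists_small_multiple:
  fixes d c :: real
  assumes "d > 0" and "c \<ge> 0"
  shows "\<exists>s>0. s * c < d"
proof (intro exI conjI)
  show "d / (c + 1) > 0" using assms by simp
  have "d / (c + 1) * c < d / (c + 1) * (c + 1)"
    using assms by (intro mult_strict_left_mono) auto
  then show "d / (c + 1) * c < d" using assms by simp
qed

lemma linear_ode_exponential:
  fixes v :: "real \<Rightarrow> 'a::real_normed_vector"
  assumes "\<And>t. t \<ge> 0 \<Longrightarrow> (v has_vector_derivative c *\<^sub>R v t) (at t within {0..})"
    and "t \<ge> 0"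
  shows "v t = exp (c * t) *\<^sub>R v 0"
proof -
  have "\<exists>C. \<forall>s\<in>{0..}. exp (- c * s) *\<^sub>R v s = C"
  proof (rule has_derivative_zero_constant[OF convex_real_interval(1)])
    fix s :: real assume "s \<in> {0..}"
    have "((\<lambda>s. exp (- c * s)) has_real_derivative exp (- c * s) * - c) (at s within {0..})"
      by (auto intro!: derivative_eq_intros)
    from has_vector_derivative_scaleR[OF this assms(1)] \<open>s \<in> {0..}\<close>
    have "((\<lambda>s. exp (- c * s) *\<^sub>R v s) has_vector_derivative 0) (at s within {0..})"
      by (simp add: scaleR_scaleR)
    then show "((\<lambda>s. exp (- c * s) *\<^sub>R v s) has_derivative (\<lambda>h. 0)) (at s within {0..})"
      by (simp add: has_vector_derivative_def)
  qed
  then obtain C where "\<And>s. s \<ge> 0 \<Longrightarrow> exp (- c * s) *\<^sub>R v s = C" by auto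
  from this[OF assms(2)] this[of 0] have "exp (- c * t) *\<^sub>R v t = v 0" by simp
  moreover have "v t = exp (c * t) *\<^sub>R (exp (- c * t) *\<^sub>R v t)"
    by (simp add: scaleR_scaleR flip: exp_add)
  ultimately show ?thesis by simp
qed

lemma integral_has_real_derivative_atLeast:
  fixes \<phi> :: "real \<Rightarrow> real"
  assumes "continuous_on {a..} \<phi>" and "t \<ge> a"
  shows "((\<lambda>u. integral {a..u} \<phi>) has_real_derivative \<phi> t) (at t within {a..})"
proof -
  have "((\<lambda>u. integral {a..u} \<phi>) has_vector_derivative \<phi> t) (at t within {a..t + 1})"
    using assms by (intro integral_has_vector_derivative continuous_on_subset[OF assms(1)]) auto
  moreover have "at t within {a..t + 1} = at t within {a..}"
    by (rule at_within_nhd[of _ "{t - 1<..<t + 1}"]) auto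
  ultimately show ?thesis by (simp add: has_real_derivative_iff_has_vector_derivative)
qed

lemma integral_exp_neg:
  fixes c t :: real
  assumes "c > 0" and "t \<ge> 0"
  shows "integral {0..t} (\<lambda>s. exp (- c * s)) = (1 - exp (- c * t)) / c"
proof -
  have "((\<lambda>s. exp (- c * s)) has_integral (- exp (- c * t) / c - - exp (- c * 0) / c)) {0..t}"
  proof (rule fundamental_theorem_of_calculus[OF assms(2)])
    fix s assume "s \<in> {0..t}"
    have "((\<lambda>s. - exp (- c * s) / c) has_real_derivative exp (- c * s)) (at s within {0..t})"
      using assms(1) by (auto intro!: derivative_eq_intros)
    then show "((\<lambda>s. - exp (- c * s) / c) has_vector_derivative exp (- c * s)) (at s within {0..t})"
      by (simp add: has_real_derivative_iff_has_vector_derivative)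
  qed
  then show ?thesis by (simp add: integral_unique diff_divide_distrib add.commute)
qed

section \<open>Matrices\<close>

declare transpose_matrix_vector [simp del]

lemma matrix_vector_mult_minus [simp]: "(A::real^'a^'b) *v (- x) = - (A *v x)"
  by (simp add: matrix_vector_mult_def vec_eq_iff sum_negf)

lemma matrix_vector_mult_matrix_inv:
  fixes A :: "real^'k^'k"
  assumes "invertible A"
  shows "A *v (matrix_inv A *v z) = z"
proof -
  have "A ** matrix_inv A = mat 1"
    using assms unfolding invertible_def matrix_inv_def by (rule someI2_ex) auto
  then show ?thesis by (simp add: matrix_vector_mul_assoc)
qed

lemma inner_transpose_matrix_vector: "(transpose A *v x) \<bullet> y = x \<bullet> ((A::real^'a^'b) *v y)"
  by (simp add: dot_lmul_matrix transpose_matrix_vector)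

lemma inner_symmetric_matrix_vector:
  fixes A :: "real^'k^'k"
  assumes "transpose A = A"
  shows "(A *v p) \<bullet> q = p \<bullet> (A *v q)"
  using inner_transpose_matrix_vector[of A p q] assms by simp

lemma tendsto_matrix_vector_mult [tendsto_intros]:
  fixes M :: "'c \<Rightarrow> real^'a^'b"
  assumes "(M \<longlongrightarrow> A) F" and "(v \<longlongrightarrow> w) F"
  shows "((\<lambda>z. M z *v v z) \<longlongrightarrow> A *v w) F"
proof -
  have rows: "B *v u = (\<chi> k. B $ k \<bullet> u)" for B :: "real^'a^'b" and u
    by (simp add: vec_eq_iff matrix_vector_mul_component)
  show ?thesis
    unfolding rows by (intro tendsto_vec_lambda tendsto_inner tendsto_vec_nth assms)
qed

lemma continuous_matrix_vector_mult [continuous_intros]: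
  fixes M :: "'c::t2_space \<Rightarrow> real^'a^'b"
  shows "continuous F M \<Longrightarrow> continuous F v \<Longrightarrow> continuous F (\<lambda>z. M z *v v z)"
  unfolding continuous_def by (rule tendsto_matrix_vector_mult)

lemma continuous_on_matrix_vector_mult [continuous_intros]:
  fixes M :: "'c::topological_space \<Rightarrow> real^'a^'b"
  shows "continuous_on S M \<Longrightarrow> continuous_on S v \<Longrightarrow> continuous_on S (\<lambda>z. M z *v v z)"
  unfolding continuous_on_def by (blast intro: tendsto_matrix_vector_mult)

lemma continuous_on_transpose [continuous_intros]:
  fixes M :: "'c::topological_space \<Rightarrow> real^'a^'b"
  shows "continuous_on S M \<Longrightarrow> continuous_on S (\<lambda>z. transpose (M z))"
  unfolding transpose_def by (intro continuous_intros)

lemma coercive_matrix_norm_lower: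
  fixes A :: "real^'k^'k"
  assumes "\<And>v. \<mu> * (norm v)\<^sup>2 \<le> v \<bullet> (A *v v)"
  shows "\<mu> * norm v \<le> norm (A *v v)"
proof -
  have "\<mu> * (norm v)\<^sup>2 \<le> norm v * norm (A *v v)"
    using assms[of v] norm_cauchy_schwarz[of v "A *v v"] by linarith
  then have "(\<mu> * norm v) * norm v \<le> norm (A *v v) * norm v"
    by (simp add: power2_eq_square algebra_simps)
  then show ?thesis by (cases "norm v = 0") (auto simp: mult_le_cancel_right)
qed

lemma coercive_matrix_invertible:
  fixes A :: "real^'k^'k"
  assumes "\<mu> > 0" and "\<And>v. \<mu> * (norm v)\<^sup>2 \<le> v \<bullet> (A *v v)"
  shows "invertible A"
proof -
  have "z = 0" if "A *v z = 0" for z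
    using coercive_matrix_norm_lower[OF assms(2), of z] that assms(1)
    by (simp add: mult_le_0_iff)
  then show ?thesis
    using invertible_left_inverse matrix_left_invertible_ker by blast
qed

lemma coercive_matrix_inverse_bound:
  fixes A :: "real^'k^'k"
  assumes "\<mu> > 0" and "\<And>v. \<mu> * (norm v)\<^sup>2 \<le> v \<bullet> (A *v v)"
  shows "norm (matrix_inv A *v z) \<le> norm z / \<mu>"
  using coercive_matrix_norm_lower[OF assms(2), of "matrix_inv A *v z"] assms(1)
    matrix_vector_mult_matrix_inv[OF coercive_matrix_invertible[OF assms]]
  by (simp add: le_divide_eq mult.commute)

lemma continuous_on_coercive_inverse:
  fixes A :: "'c::topological_space \<Rightarrow> real^'k^'k"
  assumes "continuous_on S A" and "continuous_on S v" and "\<mu> > 0"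
    and coercive: "\<And>s w. s \<in> S \<Longrightarrow> \<mu> * (norm w)\<^sup>2 \<le> w \<bullet> (A s *v w)"
  shows "continuous_on S (\<lambda>s. matrix_inv (A s) *v v s)"
  unfolding continuous_on_def
proof (intro ballI)
  fix s0 assume s0: "s0 \<in> S"
  define W where "W s = matrix_inv (A s) *v v s" for s
  define R where "R s = v s - v s0 - (A s *v W s0 - A s0 *v W s0)" for s
  have AW: "A s *v W s = v s" if "s \<in> S" for s
    unfolding W_def using coercive_matrix_invertible[OF assms(3) coercive[OF that]]
    by (rule matrix_vector_mult_matrix_inv)
  have bound: "norm (W s - W s0) \<le> norm (R s) / \<mu>" if "s \<in> S" for s
  proof -
    have "\<mu> * norm (W s - W s0) \<le> norm (A s *v (W s - W s0))"
      by (rule coercive_matrix_norm_lower[OF coercive[OF that]])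
    also have "A s *v (W s - W s0) = R s"
      unfolding R_def using AW[OF that] AW[OF s0] by (simp add: matrix_vector_mult_diff_distrib)
    finally show ?thesis using assms(3) by (simp add: field_simps)
  qed
  have "(R \<longlongrightarrow> R s0) (at s0 within S)"
    unfolding R_def[abs_def] using assms(1,2) s0 unfolding continuous_on_def
    by (intro tendsto_intros) auto
  then have "((\<lambda>s. norm (R s) / \<mu>) \<longlongrightarrow> norm (R s0) / \<mu>) (at s0 within S)"
    using assms(3) by (intro tendsto_intros) auto
  then have "((\<lambda>s. norm (R s) / \<mu>) \<longlongrightarrow> 0) (at s0 within S)"
    by (simp add: R_def)
  moreover have "\<forall>\<^sub>F s in at s0 within S. norm (W s - W s0) \<le> norm (R s) / \<mu>"
    unfolding eventually_at_filter by (intro always_eventually) (blast intro: bound)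
  ultimately have "((\<lambda>s. W s - W s0) \<longlongrightarrow> 0) (at s0 within S)"
    by (rule Lim_null_comparison[rotated])
  then show "((\<lambda>s. matrix_inv (A s) *v v s) \<longlongrightarrow> matrix_inv (A s0) *v v s0) (at s0 within S)"
    unfolding W_def[symmetric] by (subst Lim_null)
qed

lemma inner_symmetric_matrix_inv:
  fixes A :: "real^'k^'k"
  assumes "transpose A = A" and "invertible A"
  shows "(matrix_inv A *v p) \<bullet> q = p \<bullet> (matrix_inv A *v q)"
proof -
  let ?I = "matrix_inv A"
  have "p \<bullet> (?I *v q) = (A *v (?I *v p)) \<bullet> (?I *v q)"
    using matrix_vector_mult_matrix_inv[OF assms(2)] by simp
  also have "\<dots> = (?I *v p) \<bullet> (A *v (?I *v q))"
    by (rule inner_symmetric_matrix_vector[OF assms(1)])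
  also have "\<dots> = (?I *v p) \<bullet> q"
    using matrix_vector_mult_matrix_inv[OF assms(2)] by simp
  finally show ?thesis by simp
qed

lemma gram_quadratic_form:
  fixes J :: "real^'n^'m" and H :: "real^'m^'m"
  assumes "transpose H = H"
  shows "z \<bullet> ((J ** transpose J + H ** H) *v z) = (norm (transpose J *v z))\<^sup>2 + (norm (H *v z))\<^sup>2"
proof -
  have "z \<bullet> ((J ** transpose J + H ** H) *v z)
      = z \<bullet> (J *v (transpose J *v z)) + z \<bullet> (H *v (H *v z))"
    by (simp add: matrix_vector_mult_add_rdistrib matrix_vector_mul_assoc[symmetric] inner_add_right)
  also have "\<dots> = (transpose J *v z) \<bullet> (transpose J *v z) + (H *v z) \<bullet> (H *v z)"
    using inner_transpose_matrix_vector[of J z] inner_symmetric_matrix_vector[OF assms, of z]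
    by simp
  finally show ?thesis by (simp add: power2_norm_eq_inner)
qed

lemma gram_matrix_coercive:
  fixes J :: "real^'n^'m" and H :: "real^'m^'m"
  assumes "transpose H = H" and "\<mu> \<ge> 0" and "\<And>v. \<mu> * (norm v)\<^sup>2 \<le> v \<bullet> (H *v v)"
  shows "\<mu>\<^sup>2 * (norm z)\<^sup>2 \<le> z \<bullet> ((J ** transpose J + H ** H) *v z)"
proof -
  have "(\<mu> * norm z)\<^sup>2 \<le> (norm (H *v z))\<^sup>2"
    using coercive_matrix_norm_lower[OF assms(3)] assms(2) by (intro power_mono) auto
  then show ?thesis
    unfolding gram_quadratic_form[OF assms(1)] by (simp add: power_mult_distrib add_increasing)
qed

section \<open>Symmetry of the Hessian\<close>

context
  fixes h :: "real^'k \<Rightarrow> real" and G :: "real^'k \<Rightarrow> real^'k" and H :: "real^'k \<Rightarrow> real^'k^'k"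
  assumes gradient: "\<And>b. (h has_derivative (\<lambda>k. G b \<bullet> k)) (at b)"
    and hessian: "\<And>b. (G has_derivative (\<lambda>k. H b *v k)) (at b)"
begin

lemma second_difference_mean_value:
  assumes "s > 0"
  obtains z where "norm (z - b) \<le> s * (norm u + norm v)"
    and "h ((b + s *\<^sub>R u) + s *\<^sub>R v) - h (b + s *\<^sub>R u) - h (b + s *\<^sub>R v) + h b
           = s\<^sup>2 * ((H z *v v) \<bullet> u)"
proof -
  define P where "P r = h ((b + s *\<^sub>R v) + r *\<^sub>R u) - h (b + r *\<^sub>R u)" for r
  have "(P has_real_derivative (G ((b + s *\<^sub>R v) + r *\<^sub>R u) \<bullet> u - G (b + r *\<^sub>R u) \<bullet> u)) (at r)" for r
    unfolding P_def[abs_def] by (intro DERIV_diff has_real_derivative_line gradient)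
  then obtain r where r: "0 < r" "r < s"
    "P s - P 0 = s * (G ((b + s *\<^sub>R v) + r *\<^sub>R u) \<bullet> u - G (b + r *\<^sub>R u) \<bullet> u)"
    using MVT2[OF assms, of P "\<lambda>r. G ((b + s *\<^sub>R v) + r *\<^sub>R u) \<bullet> u - G (b + r *\<^sub>R u) \<bullet> u"]
    by auto
  define Q where "Q t = G ((b + r *\<^sub>R u) + t *\<^sub>R v) \<bullet> u" for t
  have "(Q has_real_derivative ((H ((b + r *\<^sub>R u) + t *\<^sub>R v) *v v) \<bullet> u)) (at t)" for t
    unfolding Q_def[abs_def] by (rule has_real_derivative_line_inner[OF hessian])
  then obtain t where t: "0 < t" "t < s" "Q s - Q 0 = s * ((H ((b + r *\<^sub>R u) + t *\<^sub>R v) *v v) \<bullet> u)"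
    using MVT2[OF assms, of Q "\<lambda>t. (H ((b + r *\<^sub>R u) + t *\<^sub>R v) *v v) \<bullet> u"] by auto
  have e1: "(b + s *\<^sub>R v) + r *\<^sub>R u = (b + r *\<^sub>R u) + s *\<^sub>R v"
    and e2: "(b + s *\<^sub>R u) + s *\<^sub>R v = (b + s *\<^sub>R v) + s *\<^sub>R u"
    by (simp_all add: algebra_simps)
  show ?thesis
  proof (rule that[of "(b + r *\<^sub>R u) + t *\<^sub>R v"])
    have "norm ((b + r *\<^sub>R u) + t *\<^sub>R v - b) = norm (r *\<^sub>R u + t *\<^sub>R v)"
      by simp
    also have "\<dots> \<le> norm (r *\<^sub>R u) + norm (t *\<^sub>R v)"
      by (rule norm_triangle_ineq)
    also have "\<dots> \<le> s * norm u + s * norm v"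
      using r t by (auto intro!: add_mono mult_right_mono)
    finally show "norm ((b + r *\<^sub>R u) + t *\<^sub>R v - b) \<le> s * (norm u + norm v)"
      by (simp add: algebra_simps)
    show "h ((b + s *\<^sub>R u) + s *\<^sub>R v) - h (b + s *\<^sub>R u) - h (b + s *\<^sub>R v) + h b
          = s\<^sup>2 * ((H ((b + r *\<^sub>R u) + t *\<^sub>R v) *v v) \<bullet> u)"
      using r(3) t(3) unfolding P_def Q_def e1 e2 by (simp add: power2_eq_square algebra_simps)
  qed
qed

text \<open>Schwarz's theorem: the second difference is symmetric in \<open>u\<close> and \<open>v\<close>, and by
  continuity of the Hessian the mean values on both sides converge to the value at \<open>b\<close>.\<close>
lemma hessian_inner_commute:
  assumes cont: "isCont H b"
  shows "(H b *v v) \<bullet> u = (H b *v u) \<bullet> v"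
proof -
  define \<psi> where "\<psi> z v u = (H z *v v) \<bullet> u" for z v u
  have \<psi>_cont: "isCont (\<lambda>z. \<psi> z v u) b" for v u
    unfolding \<psi>_def by (intro continuous_intros cont)
  have approx: "\<bar>\<psi> b v u - \<psi> b u v\<bar> \<le> 2 * e" if "e > 0" for e
  proof -
    obtain d1 where d1: "d1 > 0" "\<And>z. dist z b < d1 \<Longrightarrow> dist (\<psi> z v u) (\<psi> b v u) < e"
      using \<psi>_cont[of v u] \<open>e > 0\<close> unfolding continuous_at_eps_delta by blast
    obtain d2 where d2: "d2 > 0" "\<And>z. dist z b < d2 \<Longrightarrow> dist (\<psi> z u v) (\<psi> b u v) < e"
      using \<psi>_cont[of u v] \<open>e > 0\<close> unfolding continuous_at_eps_delta by blast
    obtain s where s: "s > 0" "s * (norm u + norm v) < min d1 d2"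
      using exists_small_multiple[of "min d1 d2" "norm u + norm v"] d1(1) d2(1) by auto
    have near: "dist z b < d1" "dist z b < d2" if "norm (z - b) \<le> s * (norm u + norm v)" for z
      using that s(2) by (simp_all add: dist_norm)
    obtain z1 where z1: "norm (z1 - b) \<le> s * (norm u + norm v)"
      "h ((b + s *\<^sub>R u) + s *\<^sub>R v) - h (b + s *\<^sub>R u) - h (b + s *\<^sub>R v) + h b = s\<^sup>2 * \<psi> z1 v u"
      using second_difference_mean_value[OF s(1), of b u v] unfolding \<psi>_def by blast
    obtain z2 where z2: "norm (z2 - b) \<le> s * (norm u + norm v)"
      "h ((b + s *\<^sub>R v) + s *\<^sub>R u) - h (b + s *\<^sub>R v) - h (b + s *\<^sub>R u) + h b = s\<^sup>2 * \<psi> z2 u v"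
      using second_difference_mean_value[OF s(1), of b v u] unfolding \<psi>_def by (auto simp: add.commute)
    have swap: "(b + s *\<^sub>R u) + s *\<^sub>R v = (b + s *\<^sub>R v) + s *\<^sub>R u" by (simp add: algebra_simps)
    have "s\<^sup>2 * \<psi> z1 v u = s\<^sup>2 * \<psi> z2 u v" using z1(2) z2(2) unfolding swap by linarith
    then have "\<psi> z1 v u = \<psi> z2 u v" using s(1) by simp
    moreover have "\<bar>\<psi> z1 v u - \<psi> b v u\<bar> < e" "\<bar>\<psi> z2 u v - \<psi> b u v\<bar> < e"
      using d1(2)[OF near(1)[OF z1(1)]] d2(2)[OF near(2)[OF z2(1)]] by (simp_all add: dist_real_def)
    ultimately show ?thesis unfolding abs_le_iff abs_less_iff by linarith
  qed
  have "\<bar>\<psi> b v u - \<psi> b u v\<bar> \<le> 0"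
  proof (rule field_le_epsilon)
    fix e :: real assume "0 < e"
    then show "\<bar>\<psi> b v u - \<psi> b u v\<bar> \<le> 0 + e" using approx[of "e / 2"] by simp
  qed
  then show ?thesis unfolding \<psi>_def by simp
qed

lemma hessian_symmetric:
  assumes "isCont H b"
  shows "transpose (H b) = H b"
proof -
  have "H b $ i $ j = H b $ j $ i" for i j
    using hessian_inner_commute[OF assms, of "axis j 1" "axis i 1"]
    by (simp add: inner_axis inner_axis' matrix_vector_mul_component)
  then show ?thesis by (simp add: vec_eq_iff transpose_def)
qed

end

section \<open>Strongly convex functions\<close>

context
  fixes h :: "'a::euclidean_space \<Rightarrow> real" and G :: "'a \<Rightarrow> 'a" and \<mu> :: real
  assumes mu_pos: "\<mu> > 0"
    and strongly_convex: "\<And>y z t. 0 \<le> t \<Longrightarrow> t \<le> 1 \<Longrightarrow>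
          h ((1 - t) *\<^sub>R y + t *\<^sub>R z) \<le> (1 - t) * h y + t * h z - \<mu> / 2 * t * (1 - t) * (norm (y - z))\<^sup>2"
    and gradient: "\<And>z. (h has_derivative (\<lambda>k. G z \<bullet> k)) (at z)"
begin

lemma strongly_convex_gradient_ineq:
  "G y \<bullet> (z - y) \<le> h z - h y - \<mu> / 2 * (norm (z - y))\<^sup>2"
proof (rule DERIV_le_of_quotient_le)
  show "((\<lambda>t. h (y + t *\<^sub>R (z - y))) has_real_derivative G y \<bullet> (z - y)) (at 0)"
    using has_real_derivative_line[of h "\<lambda>k. G y \<bullet> k" y 0 "z - y"] gradient[of y] by simp
  show "(h (y + t *\<^sub>R (z - y)) - h (y + 0 *\<^sub>R (z - y))) / t
        \<le> h z - h y - \<mu> / 2 * (1 - t) * (norm (z - y))\<^sup>2" if "0 < t" "t < 1" for t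
  proof -
    have "(1 - t) *\<^sub>R y + t *\<^sub>R z = y + t *\<^sub>R (z - y)" by (simp add: algebra_simps)
    then have "h (y + t *\<^sub>R (z - y)) - h y \<le> t * (h z - h y - \<mu> / 2 * (1 - t) * (norm (z - y))\<^sup>2)"
      using strongly_convex[of t y z] that by (simp add: norm_minus_commute algebra_simps)
    then show ?thesis using that by (simp add: divide_le_eq mult.commute)
  qed
  show "((\<lambda>t. h z - h y - \<mu> / 2 * (1 - t) * (norm (z - y))\<^sup>2)
          \<longlongrightarrow> h z - h y - \<mu> / 2 * (norm (z - y))\<^sup>2) (at_right 0)"
    by (rule tendsto_eq_intros refl | simp)+
qed

lemma strongly_convex_gradient_monotone: "\<mu> * (norm (z - y))\<^sup>2 \<le> (G z - G y) \<bullet> (z - y)"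
  using strongly_convex_gradient_ineq[of y z] strongly_convex_gradient_ineq[of z y]
  by (simp add: inner_diff_left inner_diff_right norm_minus_commute algebra_simps)

lemma strongly_convex_hessian_coercive:
  assumes "(G has_derivative D) (at b)"
  shows "\<mu> * (norm v)\<^sup>2 \<le> v \<bullet> D v"
proof -
  have "\<mu> * (norm v)\<^sup>2 \<le> D v \<bullet> v"
  proof (rule DERIV_ge_of_quotient_ge)
    show "((\<lambda>t. G (b + t *\<^sub>R v) \<bullet> v) has_real_derivative D v \<bullet> v) (at 0)"
      using has_real_derivative_line_inner[of G D b 0 v v] assms by simp
    show "\<mu> * (norm v)\<^sup>2 \<le> (G (b + t *\<^sub>R v) \<bullet> v - G (b + 0 *\<^sub>R v) \<bullet> v) / t" if "0 < t" "t < 1" for t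
    proof -
      have "\<mu> * (norm (b + t *\<^sub>R v - b))\<^sup>2 \<le> (G (b + t *\<^sub>R v) - G b) \<bullet> (b + t *\<^sub>R v - b)"
        by (rule strongly_convex_gradient_monotone)
      then have "t * (t * (\<mu> * (norm v)\<^sup>2)) \<le> t * ((G (b + t *\<^sub>R v) - G b) \<bullet> v)"
        using that by (simp add: power2_eq_square algebra_simps)
      then show ?thesis
        using that by (simp add: le_divide_eq inner_diff_left mult.commute)
    qed
  qed simp
  then show ?thesis by (simp add: inner_commute)
qed

lemma strongly_convex_minimizer_gradient:
  assumes "\<forall>z. h y \<le> h z"
  shows "G y = 0"
proof -
  have "(\<lambda>k. G y \<bullet> k) = (\<lambda>k. 0)"
    by (rule has_derivative_local_min[OF gradient]) (use assms in auto)
  then have "G y \<bullet> G y = 0" by metis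
  then show ?thesis by simp
qed

lemma strongly_convex_minimizer_exists: "\<exists>y. \<forall>z. h y \<le> h z"
proof -
  define R where "R = 2 * norm (G 0) / \<mu> + 1"
  have R: "R > 0" unfolding R_def using mu_pos by (simp add: add_nonneg_pos)
  have "continuous_on (cball 0 R) h"
    using gradient has_derivative_continuous continuous_at_imp_continuous_on by blast
  moreover have "cball (0::'a) R \<noteq> {}" using R by simp
  ultimately obtain ym where ym: "ym \<in> cball 0 R" "\<And>z. z \<in> cball 0 R \<Longrightarrow> h ym \<le> h z"
    using continuous_attains_inf[OF compact_cball] by metis
  have far: "h 0 \<le> h z" if "norm z > R" for z
  proof -
    have "G 0 \<bullet> z \<le> h z - h 0 - \<mu> / 2 * (norm z)\<^sup>2"
      using strongly_convex_gradient_ineq[of 0 z] by simp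
    moreover have "- norm (G 0) * norm z \<le> G 0 \<bullet> z"
      using norm_cauchy_schwarz[of "- G 0" z] by simp
    moreover have "norm (G 0) \<le> \<mu> / 2 * norm z"
      using that mu_pos unfolding R_def by (simp add: field_simps)
    ultimately have "h 0 + (\<mu> / 2 * norm z - norm (G 0)) * norm z \<le> h z"
      by (simp add: power2_eq_square algebra_simps)
    moreover have "0 \<le> (\<mu> / 2 * norm z - norm (G 0)) * norm z"
      using \<open>norm (G 0) \<le> \<mu> / 2 * norm z\<close> by simp
    ultimately show ?thesis by linarith
  qed
  have "h ym \<le> h z" for z
  proof (cases "z \<in> cball 0 R")
    case False
    then have "h 0 \<le> h z" using far by (simp add: dist_norm)
    moreover have "h ym \<le> h 0" using ym R by simp
    ultimately show ?thesis by linarith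
  qed (use ym in blast)
  then show ?thesis by blast
qed

lemma strongly_convex_argmin:
  defines "y\<^sub>0 \<equiv> THE y. \<forall>z. h y \<le> h z"
  shows "\<forall>z. h y\<^sub>0 \<le> h z" and "G y\<^sub>0 = 0"
proof -
  obtain ym where ym: "\<forall>z. h ym \<le> h z" using strongly_convex_minimizer_exists by blast
  have unique: "y = ym" if "\<forall>z. h y \<le> h z" for y
  proof -
    have "G ym \<bullet> (y - ym) \<le> h y - h ym - \<mu> / 2 * (norm (y - ym))\<^sup>2"
      by (rule strongly_convex_gradient_ineq)
    then have "\<mu> / 2 * (norm (y - ym))\<^sup>2 \<le> h y - h ym"
      using strongly_convex_minimizer_gradient[OF ym] by simp
    moreover have "h y \<le> h ym" using that by blast
    ultimately have "\<mu> / 2 * (norm (y - ym))\<^sup>2 \<le> 0" by linarith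
    then show ?thesis using mu_pos by (simp add: mult_le_0_iff)
  qed
  have "y\<^sub>0 = ym" unfolding y\<^sub>0_def by (rule the_equality) (use ym unique in blast)+
  with ym show "\<forall>z. h y\<^sub>0 \<le> h z" by simp
  then show "G y\<^sub>0 = 0" by (rule strongly_convex_minimizer_gradient)
qed

lemma strongly_convex_dist_argmin:
  "norm (b - (THE y. \<forall>z. h y \<le> h z)) \<le> norm (G b) / \<mu>"
proof -
  let ?s = "THE y. \<forall>z. h y \<le> h z"
  have "\<mu> * (norm (b - ?s))\<^sup>2 \<le> G b \<bullet> (b - ?s)"
    using strongly_convex_gradient_monotone[of b ?s] strongly_convex_argmin(2) by simp
  also have "\<dots> \<le> norm (G b) * norm (b - ?s)" by (rule norm_cauchy_schwarz)
  finally have "(\<mu> * norm (b - ?s)) * norm (b - ?s) \<le> norm (G b) * norm (b - ?s)"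
    by (simp add: power2_eq_square mult.assoc)
  then have "\<mu> * norm (b - ?s) \<le> norm (G b)"
    by (cases "norm (b - ?s) = 0") (use mu_pos in \<open>auto simp: mult_le_cancel_right\<close>)
  then show ?thesis using mu_pos by (simp add: le_divide_eq mult.commute)
qed

end

section \<open>The safe gradient flow at a single point\<close>

text \<open>One step of the flow in matrix form: \<open>J = \<nabla>\<^sup>2\<^sub>y\<^sub>x g\<close>, \<open>H = \<nabla>\<^sup>2\<^sub>y\<^sub>y g\<close>,
  \<open>(p, q) = \<nabla>f\<close> and \<open>r = \<nabla>\<^sub>y g\<close>, all at the current point.\<close>
locale sgf_matrices =
  fixes J :: "real^'n^'m" and H :: "real^'m^'m" and \<mu> L :: real
  assumes mu_pos: "\<mu> > 0"
    and H_symmetric: "transpose H = H"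
    and H_coercive: "\<And>v. \<mu> * (norm v)\<^sup>2 \<le> v \<bullet> (H *v v)"
    and J_bound: "\<And>v. norm (J *v v) \<le> L * norm v"
begin

definition gram :: "real^'m^'m" where
  "gram = J ** transpose J + H ** H"

definition multiplier :: "real \<Rightarrow> real^'n \<Rightarrow> real^'m \<Rightarrow> real^'m \<Rightarrow> real^'m" where
  "multiplier \<alpha> p q r = - (matrix_inv gram *v (J *v p + H *v q - \<alpha> *\<^sub>R r))"

definition velocity_x :: "real \<Rightarrow> real^'n \<Rightarrow> real^'m \<Rightarrow> real^'m \<Rightarrow> real^'n" where
  "velocity_x \<alpha> p q r = - p - transpose J *v multiplier \<alpha> p q r"

definition velocity_y :: "real \<Rightarrow> real^'n \<Rightarrow> real^'m \<Rightarrow> real^'m \<Rightarrow> real^'m" where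
  "velocity_y \<alpha> p q r = - q - transpose H *v multiplier \<alpha> p q r"

definition hypergradient :: "real^'n \<Rightarrow> real^'m \<Rightarrow> real^'n" where
  "hypergradient p q = p - transpose J *v (matrix_inv H *v q)"

lemma L_nonneg: "L \<ge> 0"
proof -
  have "0 \<le> L * norm (axis undefined 1 :: real^'n)"
    using J_bound[of "axis undefined 1"] norm_ge_zero[of "J *v axis undefined 1"] by linarith
  then show ?thesis by (simp add: zero_le_mult_iff)
qed

lemma H_invertible: "invertible H"
  by (rule coercive_matrix_invertible[OF mu_pos H_coercive])

lemma gram_coercive: "\<mu>\<^sup>2 * (norm v)\<^sup>2 \<le> v \<bullet> (gram *v v)"
  unfolding gram_def using mu_pos by (intro gram_matrix_coercive[OF H_symmetric _ H_coercive]) simp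

lemma gram_invertible: "invertible gram"
  using mu_pos by (intro coercive_matrix_invertible[OF _ gram_coercive]) simp

lemma gram_inverse_bound: "norm (matrix_inv gram *v z) \<le> norm z / \<mu>\<^sup>2"
  using mu_pos by (intro coercive_matrix_inverse_bound[OF _ gram_coercive]) simp

lemma gram_mult: "gram *v z = J *v (transpose J *v z) + H *v (H *v z)"
  unfolding gram_def by (simp add: matrix_vector_mult_add_rdistrib matrix_vector_mul_assoc)

lemma gram_inverse: "gram *v (matrix_inv gram *v z) = z"
  by (rule matrix_vector_mult_matrix_inv[OF gram_invertible])

lemma multiplier_split:
  "multiplier \<alpha> p q r = multiplier 0 p q 0 + \<alpha> *\<^sub>R (matrix_inv gram *v r)"
  unfolding multiplier_def
  by (simp add: matrix_vector_mult_diff_distrib matrix_vector_mult_scaleR)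

lemma velocity_constraint:
  "J *v velocity_x \<alpha> p q r + H *v velocity_y \<alpha> p q r = - \<alpha> *\<^sub>R r"
proof -
  let ?l = "multiplier \<alpha> p q r"
  have "J *v velocity_x \<alpha> p q r + H *v velocity_y \<alpha> p q r = - (J *v p + H *v q) - gram *v ?l"
    unfolding velocity_x_def velocity_y_def gram_mult H_symmetric
    by (simp add: matrix_vector_right_distrib algebra_simps)
  also have "gram *v ?l = - (J *v p + H *v q - \<alpha> *\<^sub>R r)"
    unfolding multiplier_def matrix_vector_mult_minus gram_inverse ..
  finally show ?thesis by simp
qed

lemma projected_descent:
  "p \<bullet> velocity_x 0 p q 0 + q \<bullet> velocity_y 0 p q 0
     = - ((norm (velocity_x 0 p q 0))\<^sup>2 + (norm (velocity_y 0 p q 0))\<^sup>2)"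
proof -
  let ?l = "multiplier 0 p q 0" and ?vx = "velocity_x 0 p q 0" and ?vy = "velocity_y 0 p q 0"
  have vx: "p = - ?vx - transpose J *v ?l" and vy: "q = - ?vy - H *v ?l"
    unfolding velocity_x_def velocity_y_def H_symmetric by simp_all
  have "?l \<bullet> (J *v ?vx) + ?l \<bullet> (H *v ?vy) = 0"
    using velocity_constraint[of 0 p q 0] by (simp add: inner_add_right[symmetric])
  moreover have "p \<bullet> ?vx = - (?vx \<bullet> ?vx) - ?l \<bullet> (J *v ?vx)"
    by (subst vx) (simp add: inner_diff_left inner_transpose_matrix_vector)
  moreover have "q \<bullet> ?vy = - (?vy \<bullet> ?vy) - ?l \<bullet> (H *v ?vy)"
    by (subst vy) (simp add: inner_diff_left inner_symmetric_matrix_vector[OF H_symmetric])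
  ultimately show ?thesis by (simp add: power2_norm_eq_inner)
qed

lemma correction_bound:
  fixes r :: "real^'m"
  defines "w \<equiv> matrix_inv gram *v r"
  shows "norm (transpose J *v w) \<le> norm r / \<mu>" and "norm (H *v w) \<le> norm r / \<mu>"
proof -
  have "(norm (transpose J *v w))\<^sup>2 + (norm (H *v w))\<^sup>2 = w \<bullet> (gram *v w)"
    unfolding gram_def by (rule gram_quadratic_form[OF H_symmetric, symmetric])
  also have "\<dots> = w \<bullet> r" unfolding w_def gram_inverse ..
  also have "\<dots> \<le> norm w * norm r" by (rule norm_cauchy_schwarz)
  also have "\<dots> \<le> (norm r / \<mu>\<^sup>2) * norm r"
    unfolding w_def by (rule mult_right_mono[OF gram_inverse_bound norm_ge_zero])
  also have "\<dots> = (norm r / \<mu>)\<^sup>2" by (simp add: power2_eq_square)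
  finally have sum: "(norm (transpose J *v w))\<^sup>2 + (norm (H *v w))\<^sup>2 \<le> (norm r / \<mu>)\<^sup>2" .
  have nonneg: "0 \<le> norm r / \<mu>" using mu_pos by simp
  have "(norm (transpose J *v w))\<^sup>2 \<le> (norm r / \<mu>)\<^sup>2" "(norm (H *v w))\<^sup>2 \<le> (norm r / \<mu>)\<^sup>2"
    using sum zero_le_power2[of "norm (transpose J *v w)"] zero_le_power2[of "norm (H *v w)"]
    by linarith+
  then show "norm (transpose J *v w) \<le> norm r / \<mu>" and "norm (H *v w) \<le> norm r / \<mu>"
    using nonneg by (auto intro: power2_le_imp_le)
qed

lemma H_inverse: "H *v (matrix_inv H *v z) = z"
  by (rule matrix_vector_mult_matrix_inv[OF H_invertible])

lemma H_inverse_bound: "norm (matrix_inv H *v z) \<le> norm z / \<mu>"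
  by (rule coercive_matrix_inverse_bound[OF mu_pos H_coercive])

text \<open>\<open>(F, -H\<^sup>-\<^sup>1 J F)\<close> lies in the kernel of \<open>[J H]\<close>; against such vectors the velocity at
  \<open>\<alpha> = 0\<close> pairs like \<open>-(p, q)\<close>, and \<open>(p, q)\<close> pairs with this one to \<open>\<parallel>F\<parallel>\<^sup>2\<close>.\<close>
lemma hypergradient_pairing:
  fixes p :: "real^'n" and q :: "real^'m"
  defines "F \<equiv> hypergradient p q"
  shows "(norm F)\<^sup>2 = velocity_y 0 p q 0 \<bullet> (matrix_inv H *v (J *v F)) - velocity_x 0 p q 0 \<bullet> F"
proof -
  let ?l = "multiplier 0 p q 0" and ?k = "matrix_inv H *v (J *v F)"
  have "velocity_x 0 p q 0 \<bullet> F = - (p \<bullet> F) - ?l \<bullet> (J *v F)"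
    unfolding velocity_x_def by (simp add: inner_diff_left inner_transpose_matrix_vector)
  moreover have "velocity_y 0 p q 0 \<bullet> ?k = - (q \<bullet> ?k) - ?l \<bullet> (J *v F)"
    unfolding velocity_y_def H_symmetric
    by (simp add: inner_diff_left inner_symmetric_matrix_vector[OF H_symmetric] H_inverse)
  moreover have "p \<bullet> F = F \<bullet> F + (matrix_inv H *v q) \<bullet> (J *v F)"
  proof -
    have "p = F + transpose J *v (matrix_inv H *v q)"
      unfolding F_def hypergradient_def by simp
    then show ?thesis by (metis inner_add_left inner_transpose_matrix_vector)
  qed
  moreover have "q \<bullet> ?k = (matrix_inv H *v q) \<bullet> (J *v F)"
    by (simp add: inner_symmetric_matrix_inv[OF H_symmetric H_invertible])
  ultimately show ?thesis by (simp add: power2_norm_eq_inner)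
qed

lemma hypergradient_le_projection:
  "(norm (hypergradient p q))\<^sup>2
     \<le> (1 + (L / \<mu>)\<^sup>2) * ((norm (velocity_x 0 p q 0))\<^sup>2 + (norm (velocity_y 0 p q 0))\<^sup>2)"
proof -
  define F where "F = hypergradient p q"
  define K where "K = L / \<mu>"
  define vx where "vx = velocity_x 0 p q 0"
  define vy where "vy = velocity_y 0 p q 0"
  define k where "k = matrix_inv H *v (J *v F)"
  have K: "K \<ge> 0" unfolding K_def using L_nonneg mu_pos by simp
  have k_bound: "norm k \<le> K * norm F"
  proof -
    have "norm k \<le> norm (J *v F) / \<mu>" unfolding k_def by (rule H_inverse_bound)
    also have "\<dots> \<le> K * norm F"
      unfolding K_def using J_bound[of F] mu_pos by (simp add: divide_right_mono)
    finally show ?thesis .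
  qed
  have "(norm F)\<^sup>2 = vy \<bullet> k - vx \<bullet> F"
    unfolding F_def vx_def vy_def k_def by (rule hypergradient_pairing)
  also have "\<dots> \<le> norm vx * norm F + norm vy * norm k"
    using norm_cauchy_schwarz[of "- vx" F] norm_cauchy_schwarz[of vy k] by simp
  also have "\<dots> \<le> norm vx * norm F + norm vy * (K * norm F)"
    using k_bound by (simp add: mult_left_mono)
  finally have "norm F * norm F \<le> (norm vx + K * norm vy) * norm F"
    by (simp add: power2_eq_square algebra_simps)
  then have "norm F \<le> norm vx + K * norm vy"
    using K by (cases "norm F = 0") (auto simp: mult_le_cancel_right)
  then have "(norm F)\<^sup>2 \<le> (norm vx + K * norm vy)\<^sup>2"
    by (rule power_mono) simp
  also have "\<dots> \<le> (1 + K\<^sup>2) * ((norm vx)\<^sup>2 + (norm vy)\<^sup>2)"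
    using zero_le_power2[of "K * norm vx - norm vy"] by (simp add: power2_eq_square algebra_simps)
  finally show ?thesis unfolding F_def K_def vx_def vy_def .
qed

lemma descent_estimate:
  assumes "\<alpha> \<ge> 0"
  shows "p \<bullet> velocity_x \<alpha> p q r + q \<bullet> velocity_y \<alpha> p q r
           \<le> - (1 / (1 + (L / \<mu>)\<^sup>2)) * (norm (hypergradient p q))\<^sup>2
             + (norm p + norm q) * \<alpha> * norm r / \<mu>"
proof -
  define w where "w = matrix_inv gram *v r"
  have split: "velocity_x \<alpha> p q r = velocity_x 0 p q 0 - \<alpha> *\<^sub>R (transpose J *v w)"
    "velocity_y \<alpha> p q r = velocity_y 0 p q 0 - \<alpha> *\<^sub>R (H *v w)"
    unfolding velocity_x_def velocity_y_def multiplier_split[of \<alpha>] w_def H_symmetric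
    by (simp_all add: matrix_vector_right_distrib matrix_vector_mult_scaleR)
  have c: "1 + (L / \<mu>)\<^sup>2 > 0" by (simp add: add_pos_nonneg)
  have "\<alpha> * (- (p \<bullet> (transpose J *v w)) - q \<bullet> (H *v w))
          \<le> \<alpha> * (norm p * norm (transpose J *v w) + norm q * norm (H *v w))"
    using norm_cauchy_schwarz[of "- p" "transpose J *v w"] norm_cauchy_schwarz[of "- q" "H *v w"]
    by (intro mult_left_mono assms) simp
  also have "\<dots> \<le> \<alpha> * (norm p * (norm r / \<mu>) + norm q * (norm r / \<mu>))"
    using correction_bound[of r] assms unfolding w_def[symmetric]
    by (intro mult_left_mono add_mono) simp_all
  finally have correction:
    "\<alpha> * (- (p \<bullet> (transpose J *v w)) - q \<bullet> (H *v w)) \<le> (norm p + norm q) * \<alpha> * norm r / \<mu>"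
    by (simp add: algebra_simps add_divide_distrib)
  have projection: "(1 / (1 + (L / \<mu>)\<^sup>2)) * (norm (hypergradient p q))\<^sup>2
          \<le> (norm (velocity_x 0 p q 0))\<^sup>2 + (norm (velocity_y 0 p q 0))\<^sup>2"
    using hypergradient_le_projection[of p q] c by (simp add: divide_le_eq mult.commute)
  show ?thesis
    using projected_descent[of p q] correction projection
    unfolding split by (simp add: inner_diff_right algebra_simps)
qed

end

section \<open>The bilevel problem and its safe gradient flow\<close>

locale bilevel =
  fixes f g :: "real^'n \<Rightarrow> real^'m \<Rightarrow> real"
    and fx :: "real^'n \<Rightarrow> real^'m \<Rightarrow> real^'n"
    and fy gy :: "real^'n \<Rightarrow> real^'m \<Rightarrow> real^'m"
    and Hyx :: "real^'n \<Rightarrow> real^'m \<Rightarrow> real^'n^'m"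
    and Hyy :: "real^'n \<Rightarrow> real^'m \<Rightarrow> real^'m^'m"
    and Cfx Cfy mu_g Lyx :: real
  assumes f_deriv: "\<And>a b. ((\<lambda>p. f (fst p) (snd p)) has_derivative
                 (\<lambda>h. fx a b \<bullet> fst h + fy a b \<bullet> snd h)) (at (a, b))"
    and fx_bound: "\<And>a b. norm (fx a b) \<le> Cfx"
    and fy_bound: "\<And>a b. norm (fy a b) \<le> Cfy"
    and g_y_deriv: "\<And>a b. (g a has_derivative (\<lambda>k. gy a b \<bullet> k)) (at b)"
    and gy_deriv: "\<And>a b. ((\<lambda>p. gy (fst p) (snd p)) has_derivative
                 (\<lambda>h. Hyx a b *v fst h + Hyy a b *v snd h)) (at (a, b))"
    and Hyy_cont: "continuous_on UNIV (\<lambda>p. Hyy (fst p) (snd p))"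
    and g_strongly_convex: "strongly_convex_y mu_g g"
    and gy_lipschitz_x: "\<And>b. Lyx-lipschitz_on UNIV (\<lambda>a. gy a b)"
    and fx_cont: "continuous_on UNIV (\<lambda>p. fx (fst p) (snd p))"
    and fy_cont: "continuous_on UNIV (\<lambda>p. fy (fst p) (snd p))"
    and Hyx_cont: "continuous_on UNIV (\<lambda>p. Hyx (fst p) (snd p))"
    and lower_level_bdd: "bdd_below {f a b | a b. gy a b = 0}"
begin

lemma mu_pos: "mu_g > 0"
  using g_strongly_convex unfolding strongly_convex_y_def by simp

lemma Cfx_nonneg: "0 \<le> Cfx"
  using fx_bound[of 0 0] norm_ge_zero[of "fx 0 0"] by linarith

lemma Cfy_nonneg: "0 \<le> Cfy"
  using fy_bound[of 0 0] norm_ge_zero[of "fy 0 0"] by linarith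

lemma g_convexity_ineq:
  "0 \<le> t \<Longrightarrow> t \<le> 1 \<Longrightarrow> g a ((1 - t) *\<^sub>R y + t *\<^sub>R z)
     \<le> (1 - t) * g a y + t * g a z - mu_g / 2 * t * (1 - t) * (norm (y - z))\<^sup>2"
  using g_strongly_convex unfolding strongly_convex_y_def by blast

lemma gy_y_deriv: "(gy a has_derivative (\<lambda>k. Hyy a b *v k)) (at b)"
  using has_derivative_second_argument[OF gy_deriv[of a b]] by simp

lemma gy_x_deriv: "((\<lambda>a. gy a b) has_derivative (\<lambda>k. Hyx a b *v k)) (at a)"
  using has_derivative_first_argument[OF gy_deriv[of a b]] by simp

lemma Hyy_symmetric: "transpose (Hyy a b) = Hyy a b"
proof (rule hessian_symmetric[OF g_y_deriv gy_y_deriv])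
  have "continuous_on UNIV (\<lambda>z::real^'m. (a, z))" by (intro continuous_intros)
  from continuous_on_compose2[OF Hyy_cont this] show "isCont (Hyy a) b"
    by (simp add: continuous_on_eq_continuous_at)
qed

lemma Hyy_coercive: "mu_g * (norm v)\<^sup>2 \<le> v \<bullet> (Hyy a b *v v)"
  by (rule strongly_convex_hessian_coercive[OF mu_pos g_convexity_ineq g_y_deriv gy_y_deriv])

lemma Hyx_bound: "norm (Hyx a b *v v) \<le> Lyx * norm v"
  by (rule derivative_norm_le_lipschitz[OF gy_x_deriv gy_lipschitz_x])

lemma sgf_matrices_at: "sgf_matrices (Hyx a b) (Hyy a b) mu_g Lyx"
  by unfold_locales (fact mu_pos Hyy_symmetric Hyy_coercive Hyx_bound)+

lemma gy_ystar: "gy a (ystar g a) = 0"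
  unfolding ystar_def by (rule strongly_convex_argmin(2)[OF mu_pos g_convexity_ineq g_y_deriv])

lemma dist_ystar: "norm (b - ystar g a) \<le> norm (gy a b) / mu_g"
  unfolding ystar_def by (rule strongly_convex_dist_argmin[OF mu_pos g_convexity_ineq g_y_deriv])

lemma f_y_deriv: "(f a has_derivative (\<lambda>k. fy a b \<bullet> k)) (at b)"
  using has_derivative_second_argument[OF f_deriv[of a b]] by simp

definition fstar :: real where
  "fstar = Inf {f a b | a b. gy a b = 0}"

lemma f_lower_bound: "fstar - Cfy / mu_g * norm (gy a b) \<le> f a b"
proof -
  let ?s = "ystar g a"
  have "fstar \<le> f a ?s"
    unfolding fstar_def by (rule cInf_lower[OF _ lower_level_bdd]) (use gy_ystar in blast)
  moreover have "f a ?s - f a b \<le> Cfy * norm (?s - b)"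
    using lipschitz_of_bounded_gradient[OF f_y_deriv fy_bound, of a ?s b] by simp
  moreover have "Cfy * norm (?s - b) \<le> Cfy * (norm (gy a b) / mu_g)"
    using mult_left_mono[OF dist_ystar[of b a] Cfy_nonneg] by (simp add: norm_minus_commute)
  ultimately show ?thesis by (simp add: algebra_simps)
qed

lemma sgf_velocity:
  "- fx a b - transpose (Hyx a b) *v sgf_lambda \<alpha> fx fy gy Hyx Hyy a b
     = sgf_matrices.velocity_x (Hyx a b) (Hyy a b) \<alpha> (fx a b) (fy a b) (gy a b)"
  "- fy a b - transpose (Hyy a b) *v sgf_lambda \<alpha> fx fy gy Hyx Hyy a b
     = sgf_matrices.velocity_y (Hyx a b) (Hyy a b) \<alpha> (fx a b) (fy a b) (gy a b)"
  unfolding sgf_lambda_def sgf_matrices.velocity_x_def[OF sgf_matrices_at]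
    sgf_matrices.velocity_y_def[OF sgf_matrices_at] sgf_matrices.multiplier_def[OF sgf_matrices_at]
    sgf_matrices.gram_def[OF sgf_matrices_at] by simp_all

lemma Fmap_eq_hypergradient:
  "Fmap fx fy Hyx Hyy a b = sgf_matrices.hypergradient (Hyx a b) (Hyy a b) (fx a b) (fy a b)"
  unfolding Fmap_def sgf_matrices.hypergradient_def[OF sgf_matrices_at] ..

end

locale sgf_trajectory = bilevel f g fx fy gy Hyx Hyy Cfx Cfy mu_g Lyx
  for f g :: "real^'n \<Rightarrow> real^'m \<Rightarrow> real"
    and fx :: "real^'n \<Rightarrow> real^'m \<Rightarrow> real^'n"
    and fy gy :: "real^'n \<Rightarrow> real^'m \<Rightarrow> real^'m"
    and Hyx :: "real^'n \<Rightarrow> real^'m \<Rightarrow> real^'n^'m"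
    and Hyy :: "real^'n \<Rightarrow> real^'m \<Rightarrow> real^'m^'m"
    and Cfx Cfy mu_g Lyx :: real +
  fixes \<alpha> :: real and x :: "real \<Rightarrow> real^'n" and y :: "real \<Rightarrow> real^'m"
  assumes alpha_pos: "\<alpha> > 0"
    and x_ode: "\<And>t. t \<ge> 0 \<Longrightarrow> (x has_vector_derivative
          (- fx (x t) (y t) - transpose (Hyx (x t) (y t)) *v sgf_lambda \<alpha> fx fy gy Hyx Hyy (x t) (y t)))
          (at t within {0..})"
    and y_ode: "\<And>t. t \<ge> 0 \<Longrightarrow> (y has_vector_derivative
          (- fy (x t) (y t) - transpose (Hyy (x t) (y t)) *v sgf_lambda \<alpha> fx fy gy Hyx Hyy (x t) (y t)))
          (at t within {0..})"
begin

definition flow_x :: "real^'n \<Rightarrow> real^'m \<Rightarrow> real^'n" where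
  "flow_x a b = sgf_matrices.velocity_x (Hyx a b) (Hyy a b) \<alpha> (fx a b) (fy a b) (gy a b)"

definition flow_y :: "real^'n \<Rightarrow> real^'m \<Rightarrow> real^'m" where
  "flow_y a b = sgf_matrices.velocity_y (Hyx a b) (Hyy a b) \<alpha> (fx a b) (fy a b) (gy a b)"

lemma trajectory_has_derivative:
  assumes "t \<ge> 0"
  shows "((\<lambda>s. (x s, y s)) has_derivative
           (\<lambda>h. (h *\<^sub>R flow_x (x t) (y t), h *\<^sub>R flow_y (x t) (y t)))) (at t within {0..})"
  using x_ode[OF assms] y_ode[OF assms]
  unfolding sgf_velocity flow_x_def[symmetric] flow_y_def[symmetric] has_vector_derivative_def
  by (rule has_derivative_Pair)

lemma gy_along_trajectory:
  assumes "t \<ge> 0"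
  shows "((\<lambda>s. gy (x s) (y s)) has_vector_derivative (- \<alpha>) *\<^sub>R gy (x t) (y t)) (at t within {0..})"
proof -
  have "Hyx (x t) (y t) *v flow_x (x t) (y t) + Hyy (x t) (y t) *v flow_y (x t) (y t)
        = - \<alpha> *\<^sub>R gy (x t) (y t)"
    unfolding flow_x_def flow_y_def by (rule sgf_matrices.velocity_constraint[OF sgf_matrices_at])
  with has_derivative_compose[OF trajectory_has_derivative[OF assms] gy_deriv]
  show ?thesis
    unfolding has_vector_derivative_def
    by (simp add: matrix_vector_mult_scaleR flip: scaleR_add_right)
qed

lemma gy_decay: "t \<ge> 0 \<Longrightarrow> gy (x t) (y t) = exp (- \<alpha> * t) *\<^sub>R gy (x 0) (y 0)"
  by (rule linear_ode_exponential[OF gy_along_trajectory])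

lemma norm_gy_decay:
  assumes "t \<ge> 0"
  shows "norm (gy (x t) (y t)) = exp (- \<alpha> * t) * norm (gy (x 0) (y 0))"
  by (simp add: gy_decay[OF assms])

lemma f_along_trajectory:
  assumes "t \<ge> 0"
  shows "((\<lambda>s. f (x s) (y s)) has_real_derivative
           fx (x t) (y t) \<bullet> flow_x (x t) (y t) + fy (x t) (y t) \<bullet> flow_y (x t) (y t)) (at t within {0..})"
proof -
  from has_derivative_compose[OF trajectory_has_derivative[OF assms] f_deriv]
  have "((\<lambda>s. f (x s) (y s)) has_derivative
      (\<lambda>h. fx (x t) (y t) \<bullet> (h *\<^sub>R flow_x (x t) (y t)) + fy (x t) (y t) \<bullet> (h *\<^sub>R flow_y (x t) (y t))))
      (at t within {0..})"
    by (simp only: fst_conv snd_conv)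
  then show ?thesis
    unfolding has_field_derivative_def
    by (rule has_derivative_eq_rhs) (simp add: fun_eq_iff algebra_simps)
qed

lemma f_descent:
  "fx a b \<bullet> flow_x a b + fy a b \<bullet> flow_y a b
     \<le> - (1 / (1 + (Lyx / mu_g)\<^sup>2)) * (norm (Fmap fx fy Hyx Hyy a b))\<^sup>2
       + (Cfx + Cfy) * \<alpha> * norm (gy a b) / mu_g"
proof -
  have "fx a b \<bullet> flow_x a b + fy a b \<bullet> flow_y a b
     \<le> - (1 / (1 + (Lyx / mu_g)\<^sup>2)) * (norm (Fmap fx fy Hyx Hyy a b))\<^sup>2
       + (norm (fx a b) + norm (fy a b)) * \<alpha> * norm (gy a b) / mu_g"
    unfolding flow_x_def flow_y_def Fmap_eq_hypergradient
    using alpha_pos by (intro sgf_matrices.descent_estimate[OF sgf_matrices_at]) simp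
  moreover have "(norm (fx a b) + norm (fy a b)) * \<alpha> * norm (gy a b) / mu_g
        \<le> (Cfx + Cfy) * \<alpha> * norm (gy a b) / mu_g"
    using fx_bound[of a b] fy_bound[of a b] alpha_pos mu_pos
    by (intro divide_right_mono mult_right_mono add_mono) auto
  ultimately show ?thesis by linarith
qed

lemma F_along_trajectory_continuous:
  "continuous_on {0..} (\<lambda>s. Fmap fx fy Hyx Hyy (x s) (y s))"
proof -
  have "continuous_on {0..} (\<lambda>s. (x s, y s))"
    unfolding continuous_on_eq_continuous_within
    using has_derivative_continuous[OF trajectory_has_derivative] by simp
  then have c: "continuous_on {0..} (\<lambda>s. \<Phi> (x s) (y s))"
    if "continuous_on UNIV (\<lambda>p. \<Phi> (fst p) (snd p))" for \<Phi> :: "real^'n \<Rightarrow> real^'m \<Rightarrow> 'z::topological_space"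
    using continuous_on_compose2[OF that] by fastforce
  have "continuous_on {0..} (\<lambda>s. matrix_inv (Hyy (x s) (y s)) *v fy (x s) (y s))"
    by (rule continuous_on_coercive_inverse[OF c[OF Hyy_cont] c[OF fy_cont] mu_pos Hyy_coercive])
  from continuous_on_matrix_vector_mult[OF continuous_on_transpose[OF c[OF Hyx_cont]] this]
  show ?thesis
    unfolding Fmap_def by (rule continuous_on_diff[OF c[OF fx_cont]])
qed

definition energy_beta :: real where
  "energy_beta = (Cfx + Cfy) / mu_g + 1"

definition energy_c :: real where
  "energy_c = 1 / (1 + (Lyx / mu_g)\<^sup>2)"

definition energy :: "real \<Rightarrow> real" where
  "energy t = f (x t) (y t) - fstar + energy_beta * norm (gy (x t) (y t))
     + energy_c * integral {0..t} (\<lambda>\<tau>. (norm (Fmap fx fy Hyx Hyy (x \<tau>) (y \<tau>)))\<^sup>2)"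

lemma energy_beta_pos: "energy_beta > 0"
  unfolding energy_beta_def using Cfx_nonneg Cfy_nonneg mu_pos by (simp add: add_nonneg_pos)

lemma energy_c_pos: "energy_c > 0"
  unfolding energy_c_def by (simp add: add_pos_nonneg)

lemma energy_deriv_nonpos:
  assumes "t \<ge> 0"
  shows "\<exists>D. (energy has_real_derivative D) (at t within {0..}) \<and> D \<le> 0"
proof -
  define N where "N s = norm (gy (x s) (y s))" for s
  define Fn where "Fn s = (norm (Fmap fx fy Hyx Hyy (x s) (y s)))\<^sup>2" for s
  define A where "A = fx (x t) (y t) \<bullet> flow_x (x t) (y t) + fy (x t) (y t) \<bullet> flow_y (x t) (y t)"
  have N_eq: "exp (- \<alpha> * s) * N 0 = N s" if "s \<ge> 0" for s
    unfolding N_def using norm_gy_decay[OF that] by simp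
  have "((\<lambda>s. exp (- \<alpha> * s) * N 0) has_real_derivative - \<alpha> * (exp (- \<alpha> * t) * N 0))
          (at t within {0..})"
    by (auto intro!: derivative_eq_intros)
  then have N: "(N has_real_derivative - \<alpha> * N t) (at t within {0..})"
    unfolding N_eq[OF assms]
    by (rule has_field_derivative_transform_within[OF _ zero_less_one]) (use assms N_eq in auto)
  have Fn: "((\<lambda>t. integral {0..t} Fn) has_real_derivative Fn t) (at t within {0..})"
    unfolding Fn_def
    by (intro integral_has_real_derivative_atLeast continuous_intros F_along_trajectory_continuous assms)
  have "(energy has_real_derivative A - 0 + energy_beta * (- \<alpha> * N t) + energy_c * Fn t)
          (at t within {0..})"
    unfolding energy_def[abs_def] N_def[symmetric] Fn_def[symmetric] A_def
    by (intro DERIV_add DERIV_diff DERIV_cmult f_along_trajectory assms DERIV_const N Fn)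
  moreover have "A - 0 + energy_beta * (- \<alpha> * N t) + energy_c * Fn t \<le> - \<alpha> * N t"
  proof -
    have "A \<le> - energy_c * Fn t + (Cfx + Cfy) * \<alpha> * N t / mu_g"
      unfolding A_def energy_c_def Fn_def N_def by (rule f_descent)
    moreover have "(Cfx + Cfy) * \<alpha> * N t / mu_g - energy_beta * \<alpha> * N t = - \<alpha> * N t"
      unfolding energy_beta_def using mu_pos by (simp add: field_simps)
    ultimately show ?thesis by (simp add: algebra_simps)
  qed
  moreover have "- \<alpha> * N t \<le> 0" using alpha_pos unfolding N_def by simp
  ultimately show ?thesis by (intro exI[of _ "A - 0 + energy_beta * (- \<alpha> * N t) + energy_c * Fn t"]) simp
qed

lemma energy_antimono:
  assumes "t \<ge> 0"
  shows "energy t \<le> energy 0"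
proof (rule DERIV_nonpos_imp_decreasing_open[OF assms])
  fix s :: real assume s: "0 < s" "s < t"
  obtain D where "(energy has_real_derivative D) (at s within {0..})" "D \<le> 0"
    using energy_deriv_nonpos[of s] s by auto
  moreover have "at s within {0..} = at s" by (rule at_within_interior) (use s in auto)
  ultimately show "\<exists>D. (energy has_real_derivative D) (at s) \<and> D \<le> 0" by auto
next
  show "continuous_on {0..t} energy"
  proof (rule continuous_on_subset[of "{0..}"])
    show "continuous_on {0..} energy"
      unfolding continuous_on_eq_continuous_within
    proof
      fix s :: real assume "s \<in> {0..}"
      then obtain D where "(energy has_real_derivative D) (at s within {0..})"
        using energy_deriv_nonpos by auto
      then show "continuous (at s within {0..}) energy" by (rule DERIV_continuous)
    qed
  qed auto
qed

lemma energy_lower_bound: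
  assumes "t \<ge> 0"
  shows "energy_c * integral {0..t} (\<lambda>\<tau>. (norm (Fmap fx fy Hyx Hyy (x \<tau>) (y \<tau>)))\<^sup>2) \<le> energy t"
proof -
  have "fstar - Cfy / mu_g * norm (gy (x t) (y t)) \<le> f (x t) (y t)"
    by (rule f_lower_bound)
  moreover have "Cfy / mu_g \<le> energy_beta"
    unfolding energy_beta_def using divide_right_mono[of Cfy "Cfx + Cfy" mu_g] Cfx_nonneg mu_pos
    by simp
  then have "Cfy / mu_g * norm (gy (x t) (y t)) \<le> energy_beta * norm (gy (x t) (y t))"
    by (rule mult_right_mono) simp
  ultimately show ?thesis unfolding energy_def by simp
qed

context
  fixes M1 :: real
  assumes M1_nonneg: "M1 \<ge> 0"
    and M1: "\<And>a b. norm (grad (\<lambda>u. f u (ystar g u)) a - Fmap fx fy Hyx Hyy a b)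
               \<le> M1 * norm (b - ystar g a)"
begin

lemma grad_ell_along_trajectory:
  assumes "\<tau> \<ge> 0"
  shows "(norm (grad (\<lambda>u. f u (ystar g u)) (x \<tau>)))\<^sup>2
           \<le> 2 * (norm (Fmap fx fy Hyx Hyy (x \<tau>) (y \<tau>)))\<^sup>2
             + 2 * ((M1 / mu_g)\<^sup>2 * (norm (gy (x 0) (y 0)))\<^sup>2) * exp (- 2 * \<alpha> * \<tau>)"
proof -
  let ?dl = "grad (\<lambda>u. f u (ystar g u)) (x \<tau>)" and ?F = "Fmap fx fy Hyx Hyy (x \<tau>) (y \<tau>)"
  define e where "e = M1 / mu_g * exp (- \<alpha> * \<tau>) * norm (gy (x 0) (y 0))"
  have "norm (?dl - ?F) \<le> M1 * norm (y \<tau> - ystar g (x \<tau>))" by (rule M1)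
  also have "\<dots> \<le> M1 * (norm (gy (x \<tau>) (y \<tau>)) / mu_g)"
    by (rule mult_left_mono[OF dist_ystar M1_nonneg])
  also have "\<dots> = e"
    unfolding e_def norm_gy_decay[OF assms] by simp
  finally have "norm ?dl \<le> norm ?F + e"
    using norm_triangle_ineq[of ?F "?dl - ?F"] by simp
  then have "(norm ?dl)\<^sup>2 \<le> (norm ?F + e)\<^sup>2" by (rule power_mono) simp
  also have "\<dots> \<le> 2 * (norm ?F)\<^sup>2 + 2 * e\<^sup>2"
    using zero_le_power2[of "norm ?F - e"] by (simp add: power2_eq_square algebra_simps)
  also have "e\<^sup>2 = (M1 / mu_g)\<^sup>2 * (norm (gy (x 0) (y 0)))\<^sup>2 * exp (- 2 * \<alpha> * \<tau>)"
    unfolding e_def by (simp add: power_mult_distrib power2_eq_square flip: exp_add)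
  finally show ?thesis by simp
qed

lemma average_grad_ell_bound:
  assumes "t > 0"
  shows "(1 / t) * integral {0..t} (\<lambda>\<tau>. (norm (grad (\<lambda>u. f u (ystar g u)) (x \<tau>)))\<^sup>2)
           \<le> 2 * energy 0 / (energy_c * t)
             + (1 - exp (- 2 * \<alpha> * t)) / (\<alpha> * t) * (M1\<^sup>2 / mu_g\<^sup>2) * (norm (gy (x 0) (y 0)))\<^sup>2"
proof -
  define Gn where "Gn \<tau> = (norm (grad (\<lambda>u. f u (ystar g u)) (x \<tau>)))\<^sup>2" for \<tau>
  define Fn where "Fn \<tau> = (norm (Fmap fx fy Hyx Hyy (x \<tau>) (y \<tau>)))\<^sup>2" for \<tau>
  define K where "K = (M1 / mu_g)\<^sup>2 * (norm (gy (x 0) (y 0)))\<^sup>2"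
  have Fn_cont: "continuous_on {0..t} Fn"
    unfolding Fn_def using F_along_trajectory_continuous
    by (intro continuous_intros) (rule continuous_on_subset, auto)
  have E0: "0 \<le> energy 0"
    using energy_lower_bound[of 0] energy_c_pos by simp
  have "energy_c * integral {0..t} Fn \<le> energy 0"
    using energy_lower_bound[of t] energy_antimono[of t] assms unfolding Fn_def by simp
  then have int_Fn: "integral {0..t} Fn \<le> energy 0 / energy_c"
    using energy_c_pos by (simp add: le_divide_eq mult.commute)
  have rhs_nonneg: "0 \<le> 2 * energy 0 / (energy_c * t)
      + (1 - exp (- 2 * \<alpha> * t)) / (\<alpha> * t) * (M1\<^sup>2 / mu_g\<^sup>2) * (norm (gy (x 0) (y 0)))\<^sup>2"
    using E0 energy_c_pos assms alpha_pos by (intro add_nonneg_nonneg) auto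
  show ?thesis
  proof (cases "Gn integrable_on {0..t}")
    case False
    then show ?thesis
      using rhs_nonneg unfolding Gn_def[abs_def] by (simp add: not_integrable_integral)
  next
    case True
    have int_exp: "(\<lambda>\<tau>. 2 * K * exp (- 2 * \<alpha> * \<tau>)) integrable_on {0..t}"
      by (intro integrable_continuous_real continuous_intros)
    have int_F: "(\<lambda>\<tau>. 2 * Fn \<tau>) integrable_on {0..t}"
      by (intro integrable_continuous_real continuous_on_mult_left Fn_cont)
    have "integral {0..t} Gn \<le> integral {0..t} (\<lambda>\<tau>. 2 * Fn \<tau> + 2 * K * exp (- 2 * \<alpha> * \<tau>))"
    proof (rule integral_le[OF True integrable_add[OF int_F int_exp]])
      show "Gn \<tau> \<le> 2 * Fn \<tau> + 2 * K * exp (- 2 * \<alpha> * \<tau>)" if "\<tau> \<in> {0..t}" for \<tau>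
        using grad_ell_along_trajectory[of \<tau>] that unfolding Gn_def Fn_def K_def by simp
    qed
    also have "\<dots> = 2 * integral {0..t} Fn + 2 * K * integral {0..t} (\<lambda>\<tau>. exp (- 2 * \<alpha> * \<tau>))"
      unfolding integral_add[OF int_F int_exp] integral_mult_right ..
    also have "\<dots> = 2 * integral {0..t} Fn + 2 * K * ((1 - exp (- 2 * \<alpha> * t)) / (2 * \<alpha>))"
      using integral_exp_neg[of "2 * \<alpha>" t] alpha_pos assms by simp
    also have "\<dots> \<le> 2 * (energy 0 / energy_c) + K * (1 - exp (- 2 * \<alpha> * t)) / \<alpha>"
      using int_Fn alpha_pos by simp
    finally have "(1 / t) * integral {0..t} Gn
        \<le> (1 / t) * (2 * (energy 0 / energy_c) + K * (1 - exp (- 2 * \<alpha> * t)) / \<alpha>)"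
      using assms by (intro mult_left_mono) auto
    also have "\<dots> = 2 * energy 0 / (energy_c * t)
        + (1 - exp (- 2 * \<alpha> * t)) / (\<alpha> * t) * (M1\<^sup>2 / mu_g\<^sup>2) * (norm (gy (x 0) (y 0)))\<^sup>2"
      unfolding K_def using assms alpha_pos energy_c_pos mu_pos by (simp add: field_simps power_divide)
    finally show ?thesis unfolding Gn_def[abs_def] .
  qed
qed

end

end

theorem theorem1:
  fixes f g :: "real^'n \<Rightarrow> real^'m \<Rightarrow> real"
    and fx gx :: "real^'n \<Rightarrow> real^'m \<Rightarrow> real^'n"
    and fy gy :: "real^'n \<Rightarrow> real^'m \<Rightarrow> real^'m"
    and Hxx :: "real^'n \<Rightarrow> real^'m \<Rightarrow> real^'n^'n"
    and Hxy :: "real^'n \<Rightarrow> real^'m \<Rightarrow> real^'m^'n"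
    and Hyx :: "real^'n \<Rightarrow> real^'m \<Rightarrow> real^'n^'m"
    and Hyy :: "real^'n \<Rightarrow> real^'m \<Rightarrow> real^'m^'m"
    and Cfx Cfy mu_g Lyy Lyx M1 \<alpha> :: real
    and x :: "real \<Rightarrow> real^'n" and y :: "real \<Rightarrow> real^'m"
  assumes
    \<comment> \<open>A1: f continuously differentiable with gradient (fx, fy), bounded and Lipschitz\<close>
    f_deriv: "\<And>a b. ((\<lambda>p. f (fst p) (snd p)) has_derivative
                 (\<lambda>h. fx a b \<bullet> fst h + fy a b \<bullet> snd h)) (at (a, b))"
    and fx_bound: "\<And>a b. norm (fx a b) \<le> Cfx"
    and fy_bound: "\<And>a b. norm (fy a b) \<le> Cfy"
    and fx_lip: "\<exists>L. L-lipschitz_on UNIV (\<lambda>p. fx (fst p) (snd p))"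
    and fy_lip: "\<exists>L. L-lipschitz_on UNIV (\<lambda>p. fy (fst p) (snd p))"
    \<comment> \<open>A2: g twice continuously differentiable with gradient (gx, gy) and Hessian blocks\<close>
    and g_deriv: "\<And>a b. ((\<lambda>p. g (fst p) (snd p)) has_derivative
                 (\<lambda>h. gx a b \<bullet> fst h + gy a b \<bullet> snd h)) (at (a, b))"
    and gx_deriv: "\<And>a b. ((\<lambda>p. gx (fst p) (snd p)) has_derivative
                 (\<lambda>h. Hxx a b *v fst h + Hxy a b *v snd h)) (at (a, b))"
    and gy_deriv: "\<And>a b. ((\<lambda>p. gy (fst p) (snd p)) has_derivative
                 (\<lambda>h. Hyx a b *v fst h + Hyy a b *v snd h)) (at (a, b))"
    and Hxx_cont: "continuous_on UNIV (\<lambda>p. Hxx (fst p) (snd p))"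
    and Hxy_cont: "continuous_on UNIV (\<lambda>p. Hxy (fst p) (snd p))"
    and Hyx_cont: "continuous_on UNIV (\<lambda>p. Hyx (fst p) (snd p))"
    and Hyy_cont: "continuous_on UNIV (\<lambda>p. Hyy (fst p) (snd p))"
    and g_sc: "strongly_convex_y mu_g g"
    and gy_lip_y: "\<And>a. Lyy-lipschitz_on UNIV (gy a)"
    and gy_lip_x: "\<And>b. Lyx-lipschitz_on UNIV (\<lambda>a. gy a b)"
    and Hyx_lip: "\<exists>L. L-lipschitz_on UNIV (\<lambda>p. Hyx (fst p) (snd p))"
    and Hyy_lip: "\<exists>L. L-lipschitz_on UNIV (\<lambda>p. Hyy (fst p) (snd p))"
    \<comment> \<open>the constant M1 of Lemma 1\<close>
    and M1_pos: "M1 > 0"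
    and M1: "\<And>a b. norm (grad (\<lambda>u. f u (ystar g u)) a - Fmap fx fy Hyx Hyy a b)
                 \<le> M1 * norm (b - ystar g a)"
    \<comment> \<open>f* is finite\<close>
    and fstar_fin: "bdd_below {f a b | a b. gy a b = 0}"
    and alpha_pos: "\<alpha> > 0"
    \<comment> \<open>(x,y) solves the safe gradient flow on [0,\<infinity>)\<close>
    and x_ode: "\<And>t. t \<ge> 0 \<Longrightarrow> (x has_vector_derivative
          (- fx (x t) (y t) - transpose (Hyx (x t) (y t)) *v sgf_lambda \<alpha> fx fy gy Hyx Hyy (x t) (y t)))
          (at t within {0..})"
    and y_ode: "\<And>t. t \<ge> 0 \<Longrightarrow> (y has_vector_derivative
          (- fy (x t) (y t) - transpose (Hyy (x t) (y t)) *v sgf_lambda \<alpha> fx fy gy Hyx Hyy (x t) (y t)))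
          (at t within {0..})"
  shows
    "(\<forall>t\<ge>0. norm (gy (x t) (y t)) = exp (- \<alpha> * t) * norm (gy (x 0) (y 0))) \<and>
     (let fstar = Inf {f a b | a b. gy a b = 0} in
      \<exists>\<beta> c. \<beta> > 0 \<and> c > 0 \<and>
        (let E = (\<lambda>t. f (x t) (y t) - fstar + \<beta> * norm (gy (x t) (y t))
                      + c * integral {0..t} (\<lambda>\<tau>. (norm (Fmap fx fy Hyx Hyy (x \<tau>) (y \<tau>)))\<^sup>2))
         in (\<forall>t\<ge>0. \<exists>D. (E has_real_derivative D) (at t within {0..}) \<and> D \<le> 0) \<and>
            (\<forall>t>0. (1 / t) * integral {0..t} (\<lambda>\<tau>. (norm (grad (\<lambda>u. f u (ystar g u)) (x \<tau>)))\<^sup>2)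
                 \<le> 2 * E 0 / (c * t)
                   + (1 - exp (- 2 * \<alpha> * t)) / (\<alpha> * t) * (M1\<^sup>2 / mu_g\<^sup>2)
                     * (norm (gy (x 0) (y 0)))\<^sup>2)))"
proof -
  interpret sgf_trajectory f g fx fy gy Hyx Hyy Cfx Cfy mu_g Lyx \<alpha> x y
  proof unfold_locales
    show "(g a has_derivative (\<lambda>k. gy a b \<bullet> k)) (at b)" for a b
      using has_derivative_second_argument[OF g_deriv[of a b]] by simp
    show "continuous_on UNIV (\<lambda>p. fx (fst p) (snd p))"
      using fx_lip lipschitz_on_continuous_on by blast
    show "continuous_on UNIV (\<lambda>p. fy (fst p) (snd p))"
      using fy_lip lipschitz_on_continuous_on by blast
  qed (fact assms)+
  show ?thesis
    unfolding Let_def fstar_def[symmetric]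
    using norm_gy_decay energy_beta_pos energy_c_pos energy_deriv_nonpos[unfolded energy_def[abs_def]]
      average_grad_ell_bound[OF less_imp_le[OF M1_pos] M1, unfolded energy_def]
    by blast
qed

end
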